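(* Let $s$ be a scoring vector with all entries positive, let $k=(k_1,\ldots,k_n)$ be a vector of non-negative integers with $\sum_i k_i=m$, let $c_i=\sum_{l<i}k_l$, $k_{\min}=\min_i k_i$, and let $P$ be any preference profile. Then $$\mathcal{P}^u_{AtoP}\le\frac{\sum_{i=1}^n\sum_{j=1}^{k_i}s_j}{\sum_{j=1}^m s_j},\qquad \mathcal{P}^e_{AtoP}\le\frac{\sum_{j=1}^{k_{\min}}s_j}{\min_{i\in[n]}\sum_{j=c_i+1}^{c_i+k_i}s_j},\qquad \mathcal{P}^n_{AtoP}\le\frac{\prod_{i=1}^n\sum_{j=1}^{k_i}s_j}{\prod_{i=1}^n\sum_{j=c_i+1}^{c_i+k_i}s_j}.$$
   Context: There are $n$ agents $a_1,\ldots,a_n$ and $m$ items. A preference profile $P=(\succ_{a_1},\ldots,\succ_{a_n})$ assigns to each agent a strict ranking of the items. A scoring vector $s=(s_1,\ldots,s_m)$ satisfies $s_1\ge\cdots\ge s_m$; an agent's value for her $j$-th preferred item is $s_j$, utilities are additive. Given $k$, agent $a_1$ first picks $k_1$ items, then $a_2$ picks $k_2$ of the remaining ones, etc., each greedily picking her most preferred remaining items; $U^k_P(a)$ is the total score $a$ receives. $SW^u_P(k)=\sum_a U^k_P(a)$, $SW^e_P(k)=\min_a U^k_P(a)$, $SW^n_P(k)=\prod_a U^k_P(a)$. For a permutation $\pi$ of $[n]$, $P_\pi$ is the profile obtained from $P$ by permuting the agents' rankings according to $\pi$. The price of assignment of agents to positions is $\mathcal{P}^x_{AtoP}=\max_{\pi}SW^x_{P_\pi}(k)/\min_{\pi}SW^x_{P_\pi}(k)$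 for $x\in\{u,e,n\}$, with $\pi$ ranging over all permutations of $[n]$. *)

theory Defs
  imports Complex_Main "HOL-Combinatorics.Permutations"
begin

(* Agents are 0..<n, items are 0..<m. A preference profile P maps agent i to a list
   (a permutation of [0..<m]); the head is the most preferred item.
   The scoring vector is s :: nat => real, 0-indexed: s 0 = s_1, ..., s (m-1) = s_m. *)

definition valid_profile :: "nat \<Rightarrow> nat \<Rightarrow> (nat \<Rightarrow> nat list) \<Rightarrow> bool" where
  "valid_profile n m P \<longleftrightarrow> (\<forall>i<n. distinct (P i) \<and> set (P i) = {0..<m})"

definition scoring_vector :: "nat \<Rightarrow> (nat \<Rightarrow> real) \<Rightarrow> bool" where
  "scoring_vector m s \<longleftrightarrow> (\<forall>i j. i \<le> j \<longrightarrow> j < m \<longrightarrow> s j \<le> s i)"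

definition pos :: "nat list \<Rightarrow> nat \<Rightarrow> nat" where
  "pos p x = (LEAST j. j < length p \<and> p ! j = x)"

fun taken :: "(nat \<Rightarrow> nat list) \<Rightarrow> (nat \<Rightarrow> nat) \<Rightarrow> nat \<Rightarrow> nat set" where
  "taken P k 0 = {}"
| "taken P k (Suc i) = taken P k i \<union> set (take (k i) (filter (\<lambda>x. x \<notin> taken P k i) (P i)))"

definition picks :: "(nat \<Rightarrow> nat list) \<Rightarrow> (nat \<Rightarrow> nat) \<Rightarrow> nat \<Rightarrow> nat list" where
  "picks P k i = take (k i) (filter (\<lambda>x. x \<notin> taken P k i) (P i))"

definition util :: "(nat \<Rightarrow> real) \<Rightarrow> (nat \<Rightarrow> nat list) \<Rightarrow> (nat \<Rightarrow> nat) \<Rightarrow> nat \<Rightarrow> real" where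
  "util s P k i = (\<Sum>x\<in>set (picks P k i). s (pos (P i) x))"

definition SW_u :: "nat \<Rightarrow> (nat \<Rightarrow> real) \<Rightarrow> (nat \<Rightarrow> nat list) \<Rightarrow> (nat \<Rightarrow> nat) \<Rightarrow> real" where
  "SW_u n s P k = (\<Sum>i<n. util s P k i)"

definition SW_e :: "nat \<Rightarrow> (nat \<Rightarrow> real) \<Rightarrow> (nat \<Rightarrow> nat list) \<Rightarrow> (nat \<Rightarrow> nat) \<Rightarrow> real" where
  "SW_e n s P k = Min ((\<lambda>i. util s P k i) ` {..<n})"

definition SW_n :: "nat \<Rightarrow> (nat \<Rightarrow> real) \<Rightarrow> (nat \<Rightarrow> nat list) \<Rightarrow> (nat \<Rightarrow> nat) \<Rightarrow> real" where
  "SW_n n s P k = (\<Prod>i<n. util s P k i)"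

definition price_AtoP ::
  "(nat \<Rightarrow> (nat \<Rightarrow> real) \<Rightarrow> (nat \<Rightarrow> nat list) \<Rightarrow> (nat \<Rightarrow> nat) \<Rightarrow> real)
    \<Rightarrow> nat \<Rightarrow> (nat \<Rightarrow> real) \<Rightarrow> (nat \<Rightarrow> nat list) \<Rightarrow> (nat \<Rightarrow> nat) \<Rightarrow> real" where
  "price_AtoP SW n s P k =
     Max {SW n s (P \<circ> \<pi>) k | \<pi>. \<pi> permutes {..<n}} /
     Min {SW n s (P \<circ> \<pi>) k | \<pi>. \<pi> permutes {..<n}}"

definition cpos :: "(nat \<Rightarrow> nat) \<Rightarrow> nat \<Rightarrow> nat" where
  "cpos k i = (\<Sum>l<i. k l)"

end

theory Submission
  imports Defs
begin

text \<open>Whatever the order of the agents, the agent in position i picks k_i items. Their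
  positions in her own ranking form a k_i-element set, and each of them is smaller than c_i + k_i:
  every item she ranks higher was either taken by one of the c_i earlier picks or is picked by her
  as well. Since the scores decrease, her utility lies between the sum of the scores at positions
  c_i, ..., c_i + k_i - 1 and the sum of the first k_i scores. These bounds do not depend on the
  permutation, so their aggregates bound both the largest and the smallest welfare, and hence the
  price.\<close>

lemma sum_le_sum_initial_segment:
  assumes "scoring_vector m s" "finite S" "S \<subseteq> {..<m}"
  shows "(\<Sum>j\<in>S. s j) \<le> (\<Sum>j<card S. s j)"
  using assms(2,3)
proof (induction S rule: finite_linorder_max_induct)
  case (insert b A)
  have "card A \<le> b"
    using card_mono[of "{..<b}" A] insert.hyps(2) by fastforce
  then have "s b \<le> s (card A)"
    using assms(1) insert.prems unfolding scoring_vector_def by auto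
  moreover have "b \<notin> A"
    using insert.hyps(2) by blast
  ultimately show ?case
    using insert by (simp add: add_mono)
qed simp

lemma sum_final_segment_le_sum:
  assumes "scoring_vector m s" "finite S" "S \<subseteq> {..<N}" "N \<le> m"
  shows "(\<Sum>j\<in>{N - card S..<N}. s j) \<le> (\<Sum>j\<in>S. s j)"
  using assms(2,3)
proof (induction S rule: finite_linorder_min_induct)
  case (insert b A)
  have "b \<notin> A" "A \<subseteq> {b<..<N}"
    using insert by auto
  then have "b + card A < N"
    using card_mono[of "{b<..<N}" A] insert.prems by fastforce
  then have "(\<Sum>j\<in>{N - Suc (card A)..<N}. s j) = s (N - Suc (card A)) + (\<Sum>j\<in>{N - card A..<N}. s j)"
    by (simp add: sum.atLeast_Suc_lessThan Suc_diff_Suc)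
  moreover have "s (N - Suc (card A)) \<le> s b"
    using \<open>b + card A < N\<close> assms(1,4) unfolding scoring_vector_def by auto
  ultimately show ?case
    using insert \<open>b \<notin> A\<close> by (simp add: add_mono)
qed simp

lemma index_lt_of_mem_take_filter:
  assumes "distinct xs" "p < length xs" "xs ! p \<in> set (take k (filter R xs))"
  shows "p < k + length (filter (\<lambda>x. \<not> R x) (take p xs))"
proof -
  define us where "us = take p xs"
  have "R (xs ! p)"
    using assms(3) by (auto dest: in_set_takeD)
  then have filter_split: "filter R xs = filter R us @ xs ! p # filter R (drop (Suc p) xs)"
    unfolding us_def using id_take_nth_drop[OF assms(2)] by (metis filter.simps(2) filter_append)
  have "xs ! p \<notin> set us"
    using assms(1,2) unfolding us_def by (auto simp: in_set_conv_nth nth_eq_iff_index_eq)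
  have "length (filter R us) < k"
  proof (rule ccontr)
    assume "\<not> length (filter R us) < k"
    then have "set (take k (filter R xs)) \<subseteq> set us"
      unfolding filter_split by (auto dest: in_set_takeD)
    then show False
      using assms(3) \<open>xs ! p \<notin> set us\<close> by blast
  qed
  moreover have "length (filter R us) + length (filter (\<lambda>x. \<not> R x) us) = p"
    using sum_length_filter_compl[of R us] assms(2) unfolding us_def by simp
  ultimately show ?thesis
    unfolding us_def by linarith
qed

lemma pos_less_length_nth_pos:
  assumes "x \<in> set xs"
  shows "pos xs x < length xs" "xs ! pos xs x = x"
proof -
  have "\<exists>j. j < length xs \<and> xs ! j = x"
    using assms by (simp add: in_set_conv_nth)
  from LeastI_ex[OF this] show "pos xs x < length xs" "xs ! pos xs x = x"
    unfolding pos_def by auto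
qed

lemma cpos_Suc: "cpos k (Suc i) = cpos k i + k i"
  unfolding cpos_def by simp

lemma cpos_add_le:
  assumes "i < n"
  shows "cpos k i + k i \<le> cpos k n"
proof -
  have "cpos k (Suc i) \<le> cpos k n"
    unfolding cpos_def using assms by (intro sum_mono2) auto
  then show ?thesis
    by (simp add: cpos_Suc)
qed

lemma valid_profileD:
  assumes "valid_profile n m Q" "i < n"
  shows "distinct (Q i)" "set (Q i) = {..<m}"
  using assms unfolding valid_profile_def by auto

lemma length_filter_notin:
  assumes "distinct xs" "T \<subseteq> set xs"
  shows "length (filter (\<lambda>x. x \<notin> T) xs) = length xs - card T"
proof -
  have "set (filter (\<lambda>x. x \<notin> T) xs) = set xs - T"
    by auto
  then have "length (filter (\<lambda>x. x \<notin> T) xs) = card (set xs - T)"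
    using assms(1) by (metis distinct_card distinct_filter)
  then show ?thesis
    using assms by (simp add: card_Diff_subset distinct_card finite_subset)
qed

lemma taken_Suc: "taken Q k (Suc i) = taken Q k i \<union> set (picks Q k i)"
  by (simp add: picks_def)

lemma set_picks_subset: "set (picks Q k i) \<subseteq> set (Q i) - taken Q k i"
  unfolding picks_def by (auto dest: in_set_takeD)

lemma distinct_picks: "distinct (Q i) \<Longrightarrow> distinct (picks Q k i)"
  unfolding picks_def by simp

lemma length_picks:
  assumes "valid_profile n m Q" "cpos k n \<le> m" "i < n"
    and "taken Q k i \<subseteq> {..<m}" "card (taken Q k i) = cpos k i"
  shows "length (picks Q k i) = k i"
proof -
  note Q = valid_profileD[OF assms(1,3)]
  have "length (Q i) = m"
    using distinct_card[OF Q(1)] Q(2) by simp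
  then have "length (filter (\<lambda>x. x \<notin> taken Q k i) (Q i)) = m - cpos k i"
    using length_filter_notin[OF Q(1)] Q(2) assms(4,5) by simp
  moreover have "cpos k i + k i \<le> m"
    using cpos_add_le[OF assms(3), of k] assms(2) by simp
  ultimately show ?thesis
    by (simp add: picks_def)
qed

lemma taken_subset_card:
  assumes "valid_profile n m Q" "cpos k n \<le> m" "i \<le> n"
  shows "taken Q k i \<subseteq> {..<m} \<and> card (taken Q k i) = cpos k i"
  using assms(3)
proof (induction i)
  case (Suc i)
  then have "i < n" "taken Q k i \<subseteq> {..<m}" "card (taken Q k i) = cpos k i"
    by auto
  note Q = valid_profileD[OF assms(1) \<open>i < n\<close>]
  have "card (set (picks Q k i)) = k i"
    using length_picks[OF assms(1,2) \<open>i < n\<close>] Suc.IH \<open>i < n\<close> distinct_picks[of Q i, OF Q(1)]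
    by (simp add: distinct_card)
  then show ?case
    using set_picks_subset[of Q k i] Q(2) \<open>taken Q k i \<subseteq> {..<m}\<close> \<open>card (taken Q k i) = cpos k i\<close>
    unfolding taken_Suc cpos_Suc
    by (subst card_Un_disjoint) (auto intro: finite_subset)
qed (simp add: cpos_def)

definition pick_positions :: "(nat \<Rightarrow> nat list) \<Rightarrow> (nat \<Rightarrow> nat) \<Rightarrow> nat \<Rightarrow> nat set" where
  "pick_positions Q k i = pos (Q i) ` set (picks Q k i)"

lemma inj_on_pos_picks: "inj_on (pos (Q i)) (set (picks Q k i))"
proof (rule inj_on_inverseI[where g = "(!) (Q i)"])
  fix x assume "x \<in> set (picks Q k i)"
  then show "Q i ! pos (Q i) x = x"
    using set_picks_subset pos_less_length_nth_pos(2) by blast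
qed

lemma util_eq_sum_pick_positions: "util s Q k i = (\<Sum>j\<in>pick_positions Q k i. s j)"
  unfolding util_def pick_positions_def by (simp add: sum.reindex[OF inj_on_pos_picks])

lemma card_pick_positions:
  assumes "valid_profile n m Q" "cpos k n \<le> m" "i < n"
  shows "card (pick_positions Q k i) = k i"
proof -
  have "length (picks Q k i) = k i"
    using length_picks[OF assms] taken_subset_card[OF assms(1,2), of i] assms(3) by simp
  then show ?thesis
    unfolding pick_positions_def card_image[OF inj_on_pos_picks]
    using distinct_picks[of Q i, OF valid_profileD(1)[OF assms(1,3)]] by (simp add: distinct_card)
qed

lemma pick_positions_subset:
  assumes "valid_profile n m Q" "cpos k n \<le> m" "i < n"
  shows "pick_positions Q k i \<subseteq> {..<cpos k i + k i}"
proof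
  fix p assume "p \<in> pick_positions Q k i"
  then obtain x where x: "x \<in> set (picks Q k i)" and p: "p = pos (Q i) x"
    unfolding pick_positions_def by blast
  note Q = valid_profileD[OF assms(1,3)]
  define T where "T = taken Q k i"
  have "x \<in> set (Q i)"
    using x set_picks_subset by blast
  then have "p < length (Q i)" "Q i ! p = x"
    unfolding p by (rule pos_less_length_nth_pos)+
  then have "p < k i + length (filter (\<lambda>y. y \<in> T) (take p (Q i)))"
    using index_lt_of_mem_take_filter[OF Q(1), of p "k i" "\<lambda>y. y \<notin> T"] x
    unfolding picks_def T_def by simp
  moreover have "length (filter (\<lambda>y. y \<in> T) (take p (Q i))) \<le> card T"
  proof -
    have "finite T"
      using taken_subset_card[OF assms(1,2), of i] assms(3) finite_subset unfolding T_def by auto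
    have "length (filter (\<lambda>y. y \<in> T) (take p (Q i))) = card (set (filter (\<lambda>y. y \<in> T) (take p (Q i))))"
      using Q(1) by (metis distinct_card distinct_filter distinct_take)
    also have "\<dots> \<le> card T"
      using \<open>finite T\<close> by (intro card_mono) auto
    finally show ?thesis .
  qed
  moreover have "card T = cpos k i"
    using taken_subset_card[OF assms(1,2), of i] assms(3) unfolding T_def by simp
  ultimately show "p \<in> {..<cpos k i + k i}"
    by simp
qed

lemma util_bounds:
  assumes "scoring_vector m s" "valid_profile n m Q" "cpos k n \<le> m" "i < n"
  shows "(\<Sum>j\<in>{cpos k i..<cpos k i + k i}. s j) \<le> util s Q k i"
    and "util s Q k i \<le> (\<Sum>j<k i. s j)"
proof -
  let ?S = "pick_positions Q k i"
  have sub: "?S \<subseteq> {..<cpos k i + k i}"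
    using pick_positions_subset[OF assms(2-4)] .
  have "cpos k i + k i \<le> m"
    using cpos_add_le[OF assms(4), of k] assms(3) by simp
  moreover have "finite ?S" "card ?S = k i"
    using finite_subset[OF sub] card_pick_positions[OF assms(2-4)] by auto
  ultimately show "(\<Sum>j\<in>{cpos k i..<cpos k i + k i}. s j) \<le> util s Q k i"
    and "util s Q k i \<le> (\<Sum>j<k i. s j)"
    using sum_final_segment_le_sum[OF assms(1) _ sub] sum_le_sum_initial_segment[OF assms(1), of ?S]
      sub subset_trans[OF sub lessThan_subset_iff[THEN iffD2]]
    by (simp_all add: util_eq_sum_pick_positions)
qed

lemma valid_profile_comp_permutes:
  assumes "valid_profile n m P" "\<pi> permutes {..<n}"
  shows "valid_profile n m (P \<circ> \<pi>)"
proof -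
  have "\<pi> i < n" if "i < n" for i
    using permutes_in_image[OF assms(2)] that by simp
  then show ?thesis
    using assms(1) unfolding valid_profile_def by simp
qed

text \<open>If the lower bound vanishes then \<open>U / L = 0\<close>, so \<open>U = 0\<close> is needed to force \<open>Max A = 0\<close>.\<close>

lemma Max_div_Min_le:
  fixes A :: "real set"
  assumes "finite A" "A \<noteq> {}" "\<And>a. a \<in> A \<Longrightarrow> L \<le> a \<and> a \<le> U" "0 \<le> L" "L = 0 \<Longrightarrow> U = 0"
  shows "Max A / Min A \<le> U / L"
proof (cases "L = 0")
  case True
  then have "Max A = 0"
    using assms(3,5) Max_in[OF assms(1,2)] by (metis order_antisym)
  then show ?thesis
    using True by simp
next
  case False
  have "L \<le> Min A" "L \<le> Max A" "Max A \<le> U"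
    using assms Max_in[OF assms(1,2)] by auto
  then have "0 \<le> Max A"
    using assms(4) by linarith
  then have "Max A / Min A \<le> U / Min A"
    using \<open>L \<le> Min A\<close> \<open>Max A \<le> U\<close> assms(4) by (simp add: divide_right_mono)
  also have "\<dots> \<le> U / L"
    using \<open>L \<le> Min A\<close> \<open>Max A \<le> U\<close> \<open>0 \<le> Max A\<close> False assms(4)
    by (intro divide_left_mono) auto
  finally show ?thesis .
qed

lemma price_AtoP_le_div:
  assumes "\<And>\<pi>. \<pi> permutes {..<n} \<Longrightarrow> L \<le> SW n s (P \<circ> \<pi>) k \<and> SW n s (P \<circ> \<pi>) k \<le> U"
    and "0 \<le> L" "L = 0 \<Longrightarrow> U = 0"
  shows "price_AtoP SW n s P k \<le> U / L"
proof -
  have "{SW n s (P \<circ> \<pi>) k | \<pi>. \<pi> permutes {..<n}} = (\<lambda>\<pi>. SW n s (P \<circ> \<pi>) k) ` {\<pi>. \<pi> permutes {..<n}}"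
    by auto
  then have "finite {SW n s (P \<circ> \<pi>) k | \<pi>. \<pi> permutes {..<n}}"
    using finite_permutations[of "{..<n}"] by simp
  moreover have "{SW n s (P \<circ> \<pi>) k | \<pi>. \<pi> permutes {..<n}} \<noteq> {}"
    using permutes_id by blast
  ultimately show ?thesis
    unfolding price_AtoP_def using assms by (intro Max_div_Min_le) auto
qed

lemma Min_image_mono:
  fixes f g :: "'a \<Rightarrow> 'b::linorder"
  assumes "finite A" "A \<noteq> {}" "\<And>x. x \<in> A \<Longrightarrow> f x \<le> g x"
  shows "Min (f ` A) \<le> Min (g ` A)"
proof -
  have "Min (g ` A) \<in> g ` A"
    using assms(1,2) by (intro Min_in) auto
  then obtain x where "x \<in> A" "Min (g ` A) = g x"
    by blast
  then show ?thesis
    using assms(1,3) by (metis Min_le finite_imageI image_eqI order_trans)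
qed

locale utility_bounds =
  fixes n :: nat and s :: "nat \<Rightarrow> real" and P :: "nat \<Rightarrow> nat list" and k :: "nat \<Rightarrow> nat"
    and L U :: "nat \<Rightarrow> real"
  assumes bounds: "\<And>\<pi> i. \<pi> permutes {..<n} \<Longrightarrow> i < n \<Longrightarrow>
      L i \<le> util s (P \<circ> \<pi>) k i \<and> util s (P \<circ> \<pi>) k i \<le> U i"
    and lower_nonneg: "\<And>i. i < n \<Longrightarrow> 0 \<le> L i"
    and lower_zero: "\<And>i. i < n \<Longrightarrow> L i = 0 \<Longrightarrow> U i = 0"
begin

lemma lower_le_upper: "i < n \<Longrightarrow> L i \<le> U i"
  using bounds[OF permutes_id] by (meson order_trans)

lemma price_AtoP_SW_u_le: "price_AtoP SW_u n s P k \<le> (\<Sum>i<n. U i) / (\<Sum>i<n. L i)"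
proof (rule price_AtoP_le_div)
  fix \<pi> assume "\<pi> permutes {..<n}"
  then show "(\<Sum>i<n. L i) \<le> SW_u n s (P \<circ> \<pi>) k \<and> SW_u n s (P \<circ> \<pi>) k \<le> (\<Sum>i<n. U i)"
    unfolding SW_u_def using bounds by (auto intro: sum_mono)
next
  show "0 \<le> (\<Sum>i<n. L i)"
    by (intro sum_nonneg lower_nonneg) simp
  assume "(\<Sum>i<n. L i) = 0"
  then have "\<forall>i<n. L i = 0"
    using lower_nonneg sum_nonneg_eq_0_iff[of "{..<n}" L] by auto
  then show "(\<Sum>i<n. U i) = 0"
    using lower_zero by simp
qed

lemma price_AtoP_SW_n_le: "price_AtoP SW_n n s P k \<le> (\<Prod>i<n. U i) / (\<Prod>i<n. L i)"
proof (rule price_AtoP_le_div)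
  fix \<pi> assume "\<pi> permutes {..<n}"
  then show "(\<Prod>i<n. L i) \<le> SW_n n s (P \<circ> \<pi>) k \<and> SW_n n s (P \<circ> \<pi>) k \<le> (\<Prod>i<n. U i)"
    unfolding SW_n_def using bounds lower_nonneg by (auto intro!: prod_mono intro: order_trans)
next
  show "0 \<le> (\<Prod>i<n. L i)"
    by (intro prod_nonneg lower_nonneg) simp
  assume "(\<Prod>i<n. L i) = 0"
  then obtain i where "i < n" "L i = 0"
    by auto
  then show "(\<Prod>i<n. U i) = 0"
    using lower_zero by (intro prod_zero) auto
qed

lemma price_AtoP_SW_e_le:
  assumes "n \<noteq> 0"
  shows "price_AtoP SW_e n s P k \<le> Min (U ` {..<n}) / Min (L ` {..<n})"
proof (rule price_AtoP_le_div)
  fix \<pi> assume "\<pi> permutes {..<n}"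
  then show "Min (L ` {..<n}) \<le> SW_e n s (P \<circ> \<pi>) k \<and> SW_e n s (P \<circ> \<pi>) k \<le> Min (U ` {..<n})"
    unfolding SW_e_def using bounds assms by (auto intro!: Min_image_mono)
next
  have "Min (L ` {..<n}) \<in> L ` {..<n}"
    using assms by (intro Min_in) auto
  then obtain i where i: "i < n" "L i = Min (L ` {..<n})"
    by auto
  then show "0 \<le> Min (L ` {..<n})"
    using lower_nonneg by metis
  assume "Min (L ` {..<n}) = 0"
  then have "U i = 0"
    using i lower_zero by simp
  moreover have "Min (L ` {..<n}) \<le> Min (U ` {..<n})"
    using assms lower_le_upper by (auto intro!: Min_image_mono)
  moreover have "Min (U ` {..<n}) \<le> U i"
    using i(1) by simp
  ultimately show "Min (U ` {..<n}) = 0"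
    using \<open>Min (L ` {..<n}) = 0\<close> by linarith
qed

end

lemma sum_cpos_intervals:
  "(\<Sum>i<n. \<Sum>j\<in>{cpos k i..<cpos k i + k i}. f j) = (\<Sum>j<cpos k n. f j)"
proof (induction n)
  case (Suc n)
  have "(\<Sum>j<cpos k n. f j) + (\<Sum>j\<in>{cpos k n..<cpos k n + k n}. f j) = (\<Sum>j<cpos k n + k n. f j)"
    by (simp add: atLeast0LessThan[symmetric] sum.atLeastLessThan_concat)
  then show ?case
    using Suc by (simp add: cpos_Suc)
qed (simp add: cpos_def)

lemma Min_sum_initial_segments:
  fixes s :: "nat \<Rightarrow> real"
  assumes "\<And>j. j < m \<Longrightarrow> 0 \<le> s j" "\<And>i. i \<in> A \<Longrightarrow> k i \<le> m" "finite A" "A \<noteq> {}"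
  shows "Min ((\<lambda>i. \<Sum>j<k i. s j) ` A) = (\<Sum>j<Min (k ` A). s j)"
proof -
  have "Min (k ` A) \<in> k ` A"
    using assms(3,4) by (intro Min_in) auto
  then obtain i0 where i0: "i0 \<in> A" "k i0 = Min (k ` A)"
    by auto
  show ?thesis
  proof (rule Min_eqI)
    fix x assume "x \<in> (\<lambda>i. \<Sum>j<k i. s j) ` A"
    then obtain i where "i \<in> A" "x = (\<Sum>j<k i. s j)"
      by blast
    moreover have "k i0 \<le> k i"
      using i0 \<open>i \<in> A\<close> assms(3) by simp
    then have "(\<Sum>j<k i0. s j) \<le> (\<Sum>j<k i. s j)"
      using assms(1) assms(2)[OF \<open>i \<in> A\<close>] by (intro sum_mono2) auto
    ultimately show "(\<Sum>j<Min (k ` A). s j) \<le> x"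
      using i0(2) by simp
  qed (use i0 assms(3) in \<open>auto intro: image_eqI[where x = i0]\<close>)
qed

lemma utility_bounds_picking_sequence:
  assumes "scoring_vector m s" "\<forall>j<m. s j > 0" "cpos k n = m" "valid_profile n m P"
  shows "utility_bounds n s P k (\<lambda>i. \<Sum>j\<in>{cpos k i..<cpos k i + k i}. s j) (\<lambda>i. \<Sum>j<k i. s j)"
proof
  fix \<pi> i assume "\<pi> permutes {..<n}" "i < n"
  then show "(\<Sum>j\<in>{cpos k i..<cpos k i + k i}. s j) \<le> util s (P \<circ> \<pi>) k i
      \<and> util s (P \<circ> \<pi>) k i \<le> (\<Sum>j<k i. s j)"
    using util_bounds[OF assms(1) valid_profile_comp_permutes[OF assms(4)]] assms(3) by simp
next
  fix i assume "i < n"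
  then have "0 < s j" if "j \<in> {cpos k i..<cpos k i + k i}" for j
    using assms(2) cpos_add_le[OF \<open>i < n\<close>, of k] assms(3) that by auto
  then show "0 \<le> (\<Sum>j\<in>{cpos k i..<cpos k i + k i}. s j)"
    and "(\<Sum>j\<in>{cpos k i..<cpos k i + k i}. s j) = 0 \<Longrightarrow> (\<Sum>j<k i. s j) = 0"
    using sum_pos[of "{cpos k i..<cpos k i + k i}" s] by (fastforce intro: sum_nonneg less_imp_le)+
qed

theorem mainTheorem8:
  fixes n m :: nat and s :: "nat \<Rightarrow> real" and k :: "nat \<Rightarrow> nat" and P :: "nat \<Rightarrow> nat list"
  assumes "n \<ge> 1"
    and "scoring_vector m s"
    and "\<forall>j<m. s j > 0"
    and "(\<Sum>i<n. k i) = m"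
    and "valid_profile n m P"
  shows "price_AtoP SW_u n s P k \<le>
           (\<Sum>i<n. \<Sum>j<k i. s j) / (\<Sum>j<m. s j)
    \<and> price_AtoP SW_e n s P k \<le>
           (\<Sum>j< Min (k ` {..<n}). s j) /
           Min ((\<lambda>i. \<Sum>j\<in>{cpos k i..<cpos k i + k i}. s j) ` {..<n})
    \<and> price_AtoP SW_n n s P k \<le>
           (\<Prod>i<n. \<Sum>j<k i. s j) /
           (\<Prod>i<n. \<Sum>j\<in>{cpos k i..<cpos k i + k i}. s j)"
proof -
  have m: "cpos k n = m"
    using assms(4) by (simp add: cpos_def)
  have k_le: "k i \<le> m" if "i < n" for i
    using cpos_add_le[OF that, of k] m by simp
  interpret utility_bounds n s P k "\<lambda>i. \<Sum>j\<in>{cpos k i..<cpos k i + k i}. s j" "\<lambda>i. \<Sum>j<k i. s j"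
    using utility_bounds_picking_sequence[OF assms(2,3) m assms(5)] .
  have "Min ((\<lambda>i. \<Sum>j<k i. s j) ` {..<n}) = (\<Sum>j<Min (k ` {..<n}). s j)"
    using assms(1,3) k_le
    by (intro Min_sum_initial_segments[of m]) (auto simp: lessThan_empty_iff intro: less_imp_le)
  then show ?thesis
    using price_AtoP_SW_u_le price_AtoP_SW_e_le price_AtoP_SW_n_le assms(1)
    by (simp add: sum_cpos_intervals m)
qed

end
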